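(* Let $n\ge1$, let $\lambda=(\lambda_0,\dots,\lambda_n)$ be a marking of $A_n$ with $\lambda_0\ge\lambda_1\ge\cdots\ge\lambda_n$, and let $(U_1,U_2)$ be any admissible decomposition of $(P_n,A_n,\lambda)$. Then the number of lattice points in $\mathcal{CO}_{U_1,U_2}(\lambda)$ is $$\prod_{0\le i<j\le n}\frac{\lambda_i-\lambda_j+j-i}{j-i}.$$
   Context: $P_n$ is the poset on $\{p_{i,j}: 0\le i\le j\le n\}$ whose cover relations are exactly $p_{i-1,j}\to p_{i,j}\to p_{i-1,j-1}$ for $1\le i\le j\le n$ ($q\to p$ means $p$ covers $q$). $A_n=\{p_{0,0},\dots,p_{0,n}\}$ with marking $\lambda(p_{0,k})=\lambda_k\in\mathbb{Z}_{\ge0}$. A decomposition is a pair $(U_1,U_2)$ of disjoint sets with $U_1\cup U_2=P_n\setminus A_n$; it is admissible if there are no $u_1\in U_1$, $u_2\in U_2$ with $u_1\prec u_2$. With $A_1=A_n\cup U_1$, the marked chain-order polytope $\mathcal{CO}_{U_1,U_2}(\lambda)\subset\mathbb{R}^{P_n\setminus A_n}$ is the set of $(x_p)$ such that: (i) $x_p\le\lambda_a$ whenever $p\in U_1$, $a\in A_n$, $p\prec a$; (ii) $\lambda_b\le x_q$ whenever $q\in U_1$, $b\in A_n$, $b\prec q$; (iii) $x_p\le x_q$ whenever $p,q\in U_1$, $p\prec q$; (iv) $x_p\ge0$ for $p\in U_2$; (v) for every chain $b\prec p_m\prec\cdots\prec p_1\prec a$ with $m\ge1$, $a,b\in A_1$,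 $p_i\in U_2$: $x_{p_1}+\cdots+x_{p_m}\le\lambda_a-\lambda_b$, where $\lambda_q$ means $x_q$ for $q\in U_1$; (vi) for every chain $p_1\prec\cdots\prec p_s\prec q$ with $q\in U_1$, $p_i\in U_2$: $x_{p_1}+\cdots+x_{p_s}\le x_q$. (Here $\lambda_a$ for $a=p_{0,k}$ means $\lambda_k$.) Lattice points are the points of $\mathcal{CO}_{U_1,U_2}(\lambda)\cap\mathbb{Z}^{P_n\setminus A_n}$. *)

theory Defs
  imports Complex_Main
begin

text \<open>Elements p_{i,j} of P_n are encoded as pairs (i,j) with 0 \<le> i \<le> j \<le> n.
  A_n = {p_{0,k}} is the set of pairs (0,k).\<close>

definition Pn :: "nat \<Rightarrow> (nat \<times> nat) set" where
  "Pn n = {(i, j). i \<le> j \<and> j \<le> n}"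

definition An :: "nat \<Rightarrow> (nat \<times> nat) set" where
  "An n = {(0, k) | k. k \<le> n}"

text \<open>cover n q p: p covers q (q \<rightarrow> p).\<close>
definition cover :: "nat \<Rightarrow> nat \<times> nat \<Rightarrow> nat \<times> nat \<Rightarrow> bool" where
  "cover n q p \<longleftrightarrow> (\<exists>i j. 1 \<le> i \<and> i \<le> j \<and> j \<le> n \<and>
      ((q = (i - 1, j) \<and> p = (i, j)) \<or> (q = (i, j) \<and> p = (i - 1, j - 1))))"

definition prec :: "nat \<Rightarrow> nat \<times> nat \<Rightarrow> nat \<times> nat \<Rightarrow> bool" where
  "prec n = tranclp (cover n)"

definition admissible :: "nat \<Rightarrow> (nat \<times> nat) set \<Rightarrow> (nat \<times> nat) set \<Rightarrow> bool" where
  "admissible n U1 U2 \<longleftrightarrow> U1 \<inter> U2 = {} \<and> U1 \<union> U2 = Pn n - An n \<and>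
     \<not> (\<exists>u1\<in>U1. \<exists>u2\<in>U2. prec n u1 u2)"

text \<open>Value at a point of A_1 = A_n \<union> U_1: the marking on A_n, the coordinate on U_1.\<close>
definition lamx :: "(nat \<Rightarrow> nat) \<Rightarrow> (nat \<times> nat \<Rightarrow> 'a::semiring_1) \<Rightarrow> nat \<times> nat \<Rightarrow> 'a" where
  "lamx lam x q = (if fst q = 0 then of_nat (lam (snd q)) else x q)"

text \<open>Membership in the marked chain-order polytope CO_{U1,U2}(lam); x is a point of
  R^{P_n \ A_n}, encoded as a function vanishing outside P_n \ A_n.\<close>
definition in_CO :: "nat \<Rightarrow> (nat \<times> nat) set \<Rightarrow> (nat \<times> nat) set \<Rightarrow> (nat \<Rightarrow> nat)
     \<Rightarrow> (nat \<times> nat \<Rightarrow> 'a::linordered_idom) \<Rightarrow> bool" where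
  "in_CO n U1 U2 lam x \<longleftrightarrow>
     (\<forall>p. p \<notin> Pn n - An n \<longrightarrow> x p = 0) \<and>
     (\<forall>p\<in>U1. \<forall>a\<in>An n. prec n p a \<longrightarrow> x p \<le> of_nat (lam (snd a))) \<and>
     (\<forall>q\<in>U1. \<forall>b\<in>An n. prec n b q \<longrightarrow> of_nat (lam (snd b)) \<le> x q) \<and>
     (\<forall>p\<in>U1. \<forall>q\<in>U1. prec n p q \<longrightarrow> x p \<le> x q) \<and>
     (\<forall>p\<in>U2. 0 \<le> x p) \<and>
     (\<forall>a\<in>An n \<union> U1. \<forall>b\<in>An n \<union> U1. \<forall>ps. ps \<noteq> [] \<and> set ps \<subseteq> U2 \<and>
         sorted_wrt (\<lambda>u v. prec n v u) ps \<and> prec n (hd ps) a \<and> prec n b (last ps)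
         \<longrightarrow> sum_list (map x ps) \<le> lamx lam x a - lamx lam x b) \<and>
     (\<forall>q\<in>U1. \<forall>ps. ps \<noteq> [] \<and> set ps \<subseteq> U2 \<and>
         sorted_wrt (prec n) ps \<and> prec n (last ps) q
         \<longrightarrow> sum_list (map x ps) \<le> x q)"

definition lattice_points :: "nat \<Rightarrow> (nat \<times> nat) set \<Rightarrow> (nat \<times> nat) set \<Rightarrow> (nat \<Rightarrow> nat)
     \<Rightarrow> (nat \<times> nat \<Rightarrow> int) set" where
  "lattice_points n U1 U2 lam = {x. in_CO n U1 U2 lam x}"

end

theory Submission
  imports Defs "Jordan_Normal_Form.Determinant"
begin

text \<open>The lattice points of a marked chain-order polytope are in bijection with the Gelfand-Tsetlin
  patterns with top row \<open>\<lambda>\<close>, i.e.\ the lattice points of the marked order polytope. The transfer map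
  keeps the coordinates on \<open>U1\<close> and replaces a coordinate on \<open>U2\<close> by its excess over the maximum of
  its lower covers. Its inverse is computed recursively along the covers; since no point of \<open>U1\<close>
  lies below a point of \<open>U2\<close>, unfolding this recursion at a point of \<open>U2\<close> follows a chain in \<open>U2\<close>
  down to a marked point, so the chain inequalities of the polytope are exactly the order
  inequalities of the pattern.

  The patterns are counted by splitting off the row below the top row, which interlaces it. The
  product \<open>\<Prod>i<j. (c i - c j + j - i) / (j - i)\<close> obeys the same branching recursion: it is the
  determinant \<open>det (x i gchoose k)\<close> at \<open>x i = i - c i\<close>, and summing that determinant over an
  interlacing row telescopes row by row to the determinant of one size larger.\<close>

section \<open>Determinants of generalized binomial coefficients\<close>

lemma det_mat_scale_rows_cols:
  fixes a b :: "nat \<Rightarrow> 'a::comm_ring_1"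
  shows "det (mat m m (\<lambda>(i, k). a i * b k * C i k)) =
    (\<Prod>i<m. a i) * (\<Prod>k<m. b k) * det (mat m m (\<lambda>(i, k). C i k))"
proof -
  have "det (mat m m (\<lambda>(i, k). a i * b k * C i k)) =
      (\<Sum>p | p permutes {0..<m}. signof p * (\<Prod>i=0..<m. a i * b (p i) * C i (p i)))"
    by (subst det_def'[where n = m]) (auto intro!: sum.cong prod.cong simp: permutes_in_image)
  also have "\<dots> = (\<Sum>p | p permutes {0..<m}.
      (\<Prod>i<m. a i) * (\<Prod>k<m. b k) * (signof p * (\<Prod>i=0..<m. C i (p i))))"
  proof (rule sum.cong[OF refl])
    fix p assume "p \<in> {p. p permutes {0..<m}}"
    then have "(\<Prod>i=0..<m. b (p i)) = (\<Prod>k<m. b k)"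
      using prod.permute[of p "{0..<m}" b] by (simp add: comp_def atLeast0LessThan)
    then show "signof p * (\<Prod>i=0..<m. a i * b (p i) * C i (p i)) =
        (\<Prod>i<m. a i) * (\<Prod>k<m. b k) * (signof p * (\<Prod>i=0..<m. C i (p i)))"
      by (simp add: prod.distrib atLeast0LessThan)
  qed
  also have "\<dots> = (\<Prod>i<m. a i) * (\<Prod>k<m. b k) * det (mat m m (\<lambda>(i, k). C i k))"
    by (subst det_def'[where n = m])
      (auto simp: sum_distrib_left intro!: sum.cong prod.cong simp: permutes_in_image)
  finally show ?thesis .
qed

lemma det_eq_minor_if_first_row_unit:
  assumes A: "(A :: 'a::comm_ring_1 mat) \<in> carrier_mat (Suc m) (Suc m)"
    and "A $$ (0, 0) = 1" and "\<And>j. 0 < j \<Longrightarrow> j < Suc m \<Longrightarrow> A $$ (0, j) = 0"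
  shows "det A = det (mat_delete A 0 0)"
proof -
  have "det A = (\<Sum>j<Suc m. A $$ (0, j) * cofactor A 0 j)"
    by (rule laplace_expansion_row[OF A]) simp
  also have "\<dots> = (\<Sum>j<Suc m. if j = 0 then det (mat_delete A 0 0) else 0)"
    by (rule sum.cong[OF refl]) (simp add: assms cofactor_def)
  finally show ?thesis by simp
qed

lemma det_eq_minor_if_first_col_unit:
  assumes A: "(A :: 'a::comm_ring_1 mat) \<in> carrier_mat (Suc m) (Suc m)"
    and "A $$ (0, 0) = 1" and "\<And>i. 0 < i \<Longrightarrow> i < Suc m \<Longrightarrow> A $$ (i, 0) = 0"
  shows "det A = det (mat_delete A 0 0)"
proof -
  have "det A = (\<Sum>i<Suc m. A $$ (i, 0) * cofactor A i 0)"
    by (rule laplace_expansion_column[OF A]) simp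
  also have "\<dots> = (\<Sum>i<Suc m. if i = 0 then det (mat_delete A 0 0) else 0)"
    by (rule sum.cong[OF refl]) (simp add: assms cofactor_def)
  finally show ?thesis by simp
qed

lemma gbinomial_Suc_eq_mult:
  fixes a :: "'a::field_char_0"
  shows "a gchoose (Suc k) = (a - of_nat k) / of_nat (Suc k) * (a gchoose k)"
proof -
  have "of_nat (Suc k) * (a gchoose Suc k) = (a - of_nat k) * (a gchoose k)"
    using gbinomial_mult_1[of a k] by (simp add: algebra_simps)
  then show ?thesis
    by (simp add: eq_divide_eq mult.commute del: of_nat_Suc)
qed

lemma sum_gbinomial_int_interval:
  fixes y :: "'a::field_char_0"
  assumes "a \<le> b"
  shows "(\<Sum>t\<in>{a..b}. (y - of_int t) gchoose k) =
    ((y - of_int a + 1) gchoose Suc k) - ((y - of_int b) gchoose Suc k)"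
proof -
  obtain d where b: "b = a + int d"
    using assms by (metis zle_iff_zadd)
  have "(\<Sum>t\<in>{a..a + int d}. (y - of_int t) gchoose k) =
      ((y - of_int a + 1) gchoose Suc k) - ((y - of_int (a + int d)) gchoose Suc k)"
  proof (induction d)
    case 0
    show ?case
      using gbinomial_Suc_Suc[of "y - of_int a" k] by simp
  next
    case (Suc d)
    define z where "z = y - of_int (a + int d + 1)"
    have "{a..a + int (Suc d)} = insert (a + int d + 1) {a..a + int d}"
      by auto
    then have "(\<Sum>t\<in>{a..a + int (Suc d)}. (y - of_int t) gchoose k) =
        (z gchoose k) + (\<Sum>t\<in>{a..a + int d}. (y - of_int t) gchoose k)"
      unfolding z_def by (simp add: add.commute)
    also have "\<dots> = ((y - of_int a + 1) gchoose Suc k) - (z gchoose Suc k)"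
      using gbinomial_Suc_Suc[of z k] by (simp add: Suc z_def algebra_simps)
    finally show ?case
      by (simp add: z_def algebra_simps)
  qed
  then show ?thesis
    using b by simp
qed

definition gbinomial_mat :: "nat \<Rightarrow> (nat \<Rightarrow> 'a::field_char_0) \<Rightarrow> 'a mat" where
  "gbinomial_mat m x = mat m m (\<lambda>(i, k). x i gchoose k)"

lemma gbinomial_mat_carrier [simp]: "gbinomial_mat m x \<in> carrier_mat m m"
  and gbinomial_mat_dim [simp]: "dim_row (gbinomial_mat m x) = m" "dim_col (gbinomial_mat m x) = m"
  and gbinomial_mat_index [simp]:
    "i < m \<Longrightarrow> k < m \<Longrightarrow> gbinomial_mat m x $$ (i, k) = x i gchoose k"
  unfolding gbinomial_mat_def by simp_all

text \<open>Right multiplication by this unitriangular matrix subtracts from column \<open>k\<close> the multiple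
  of column \<open>k - 1\<close> that turns \<open>x i gchoose k\<close> into \<open>(x i - x 0) / k * (x i gchoose (k - 1))\<close>.\<close>
definition column_reduction_mat :: "nat \<Rightarrow> 'a::field_char_0 \<Rightarrow> 'a mat" where
  "column_reduction_mat m x0 = mat m m (\<lambda>(j, k).
     if j = k then 1 else if Suc j = k then - (x0 - of_nat j) / of_nat k else 0)"

lemma column_reduction_mat_carrier [simp]: "column_reduction_mat m x0 \<in> carrier_mat m m"
  and column_reduction_mat_dim [simp]:
    "dim_row (column_reduction_mat m x0) = m" "dim_col (column_reduction_mat m x0) = m"
  and column_reduction_mat_index [simp]: "j < m \<Longrightarrow> k < m \<Longrightarrow> column_reduction_mat m x0 $$ (j, k) =
     (if j = k then 1 else if Suc j = k then - (x0 - of_nat j) / of_nat k else 0)"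
  unfolding column_reduction_mat_def by simp_all

lemma det_column_reduction_mat: "det (column_reduction_mat m x0) = 1"
proof -
  have "upper_triangular (column_reduction_mat m x0)"
    unfolding upper_triangular_def column_reduction_mat_def by simp
  then have "det (column_reduction_mat m x0) = prod_list (diag_mat (column_reduction_mat m x0))"
    by (rule det_upper_triangular[OF _ column_reduction_mat_carrier])
  also have "diag_mat (column_reduction_mat m x0) = replicate m 1"
    by (rule nth_equalityI) (simp_all add: diag_mat_def)
  finally show ?thesis by simp
qed

lemma gbinomial_mat_column_reduction_index:
  assumes i: "i < m" and k: "k < m"
  shows "(gbinomial_mat m x * column_reduction_mat m (x 0)) $$ (i, k) =
    (if k = 0 then 1 else (x i - x 0) / of_nat k * (x i gchoose (k - 1)))"
proof -
  have "(gbinomial_mat m x * column_reduction_mat m (x 0)) $$ (i, k) =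
      (\<Sum>j<m. (if j = k then x i gchoose j else 0) +
        (if Suc j = k then (x i gchoose j) * (- (x 0 - of_nat j) / of_nat k) else 0))"
    using i k by (auto simp: scalar_prod_def atLeast0LessThan ring_distribs intro!: sum.cong)
  also have "\<dots> = (x i gchoose k) +
      (if k = 0 then 0 else (x i gchoose (k - 1)) * (- (x 0 - of_nat (k - 1)) / of_nat k))"
    using k by (cases k) (simp_all add: sum.distrib)
  also have "\<dots> = (if k = 0 then 1 else (x i - x 0) / of_nat k * (x i gchoose (k - 1)))"
    by (cases k) (simp_all add: gbinomial_Suc_eq_mult diff_divide_distrib algebra_simps)
  finally show ?thesis .
qed

lemma det_gbinomial_mat_Suc:
  "det (gbinomial_mat (Suc m) x) =
    (\<Prod>i<m. x (Suc i) - x 0) / fact m * det (gbinomial_mat m (\<lambda>i. x (Suc i)))"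
proof -
  let ?A = "gbinomial_mat (Suc m) x * column_reduction_mat (Suc m) (x 0)"
  have A: "?A \<in> carrier_mat (Suc m) (Suc m)"
    by (rule mult_carrier_mat[OF gbinomial_mat_carrier column_reduction_mat_carrier])
  have "det (gbinomial_mat (Suc m) x) = det ?A"
    by (simp add: det_mult[of _ "Suc m"] det_column_reduction_mat)
  also have "\<dots> = det (mat_delete ?A 0 0)"
    by (rule det_eq_minor_if_first_row_unit[OF A])
      (simp_all add: gbinomial_mat_column_reduction_index del: index_mult_mat(1))
  also have "mat_delete ?A 0 0 = mat m m (\<lambda>(i, k).
      (x (Suc i) - x 0) * (1 / of_nat (Suc k)) * (x (Suc i) gchoose k))"
    by (rule eq_matI)
      (simp_all add: mat_delete_def gbinomial_mat_column_reduction_index del: index_mult_mat(1))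
  also have "det \<dots> = (\<Prod>i<m. x (Suc i) - x 0) * (\<Prod>k<m. 1 / of_nat (Suc k)) *
      det (gbinomial_mat m (\<lambda>i. x (Suc i)))"
    unfolding gbinomial_mat_def by (rule det_mat_scale_rows_cols)
  also have "(\<Prod>k<m. 1 / of_nat (Suc k)) = (1 :: 'a) / fact m"
    by (simp add: fact_prod_Suc prod_dividef atLeast0LessThan)
  finally show ?thesis by simp
qed

definition vandermonde_ratio :: "nat \<Rightarrow> (nat \<Rightarrow> 'a::field_char_0) \<Rightarrow> 'a" where
  "vandermonde_ratio m x = (\<Prod>(i, j)\<in>{(i, j). i < j \<and> j < m}. (x j - x i) / (of_nat j - of_nat i))"

lemma vandermonde_ratio_Suc:
  "vandermonde_ratio (Suc m) x =
    (\<Prod>i<m. x (Suc i) - x 0) / fact m * vandermonde_ratio m (\<lambda>i. x (Suc i))"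
proof -
  let ?f = "\<lambda>(i, j). (x j - x i) / (of_nat j - of_nat i)"
  let ?first = "(\<lambda>j. (0, Suc j)) ` {..<m}"
  let ?rest = "(\<lambda>(i, j). (Suc i, Suc j)) ` {(i, j). i < j \<and> j < m}"
  have split: "{(i, j). i < j \<and> j < Suc m} = ?first \<union> ?rest"
  proof (intro equalityI subsetI)
    fix p assume "p \<in> {(i, j). i < j \<and> j < Suc m}"
    then obtain i j where p: "p = (i, j)" "i < j" "j < Suc m"
      by auto
    show "p \<in> ?first \<union> ?rest"
    proof (cases i)
      case 0
      then show ?thesis using p by (auto intro!: image_eqI[of _ _ "j - 1"])
    next
      case (Suc i')
      then show ?thesis using p by (auto intro!: image_eqI[of _ _ "(i', j - 1)"])
    qed
  qed auto
  have "finite {(i, j). i < j \<and> j < m}"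
    by (rule finite_subset[of _ "{..<m} \<times> {..<m}"]) auto
  then have "vandermonde_ratio (Suc m) x = prod ?f ?first * prod ?f ?rest"
    unfolding vandermonde_ratio_def split by (intro prod.union_disjoint) auto
  also have "prod ?f ?first = (\<Prod>i<m. x (Suc i) - x 0) / fact m"
    by (subst prod.reindex) (auto simp: inj_on_def prod_dividef fact_prod_Suc atLeast0LessThan)
  also have "prod ?f ?rest = vandermonde_ratio m (\<lambda>i. x (Suc i))"
    unfolding vandermonde_ratio_def by (subst prod.reindex) (auto simp: inj_on_def intro!: prod.cong)
  finally show ?thesis .
qed

lemma det_gbinomial_mat_eq_vandermonde_ratio:
  "det (gbinomial_mat m x) = vandermonde_ratio m x"
proof (induction m arbitrary: x)
  case 0
  then show ?case
    by (simp add: det_dim_zero vandermonde_ratio_def)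
next
  case (Suc m)
  then show ?case
    by (simp add: det_gbinomial_mat_Suc vandermonde_ratio_Suc)
qed

definition row_difference_mat :: "nat \<Rightarrow> 'a::comm_ring_1 mat" where
  "row_difference_mat m = mat m m (\<lambda>(i, j). if i = j then 1 else if i = Suc j then -1 else 0)"

lemma row_difference_mat_carrier [simp]: "row_difference_mat m \<in> carrier_mat m m"
  and row_difference_mat_dim [simp]:
    "dim_row (row_difference_mat m) = m" "dim_col (row_difference_mat m) = m"
  and row_difference_mat_index [simp]: "i < m \<Longrightarrow> j < m \<Longrightarrow>
    row_difference_mat m $$ (i, j) = (if i = j then 1 else if i = Suc j then -1 else 0)"
  unfolding row_difference_mat_def by simp_all

lemma det_row_difference_mat: "det (row_difference_mat m) = 1"
proof -
  have "det (row_difference_mat m) = prod_list (diag_mat (row_difference_mat m))"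
    by (rule det_lower_triangular[OF _ row_difference_mat_carrier]) simp
  also have "diag_mat (row_difference_mat m) = replicate m 1"
    by (rule nth_equalityI) (simp_all add: diag_mat_def)
  finally show ?thesis by simp
qed

lemma row_difference_gbinomial_mat_index:
  assumes i: "i < m" and k: "k < m"
  shows "(row_difference_mat m * gbinomial_mat m x) $$ (i, k) =
    (x i gchoose k) - (if i = 0 then 0 else x (i - 1) gchoose k)"
proof -
  have "(row_difference_mat m * gbinomial_mat m x) $$ (i, k) =
      (\<Sum>j<m. (if j = i then x j gchoose k else 0) - (if Suc j = i then x j gchoose k else 0))"
    using i k by (auto simp: scalar_prod_def atLeast0LessThan intro!: sum.cong)
  also have "\<dots> = (x i gchoose k) - (if i = 0 then 0 else x (i - 1) gchoose k)"
    using i by (cases i) (simp_all add: sum_subtractf)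
  finally show ?thesis .
qed

lemma det_gbinomial_mat_Suc_eq_det_differences:
  "det (gbinomial_mat (Suc m) x) =
    det (mat m m (\<lambda>(i, k). (x (Suc i) gchoose Suc k) - (x i gchoose Suc k)))"
proof -
  let ?A = "row_difference_mat (Suc m) * gbinomial_mat (Suc m) x"
  have A: "?A \<in> carrier_mat (Suc m) (Suc m)"
    by (rule mult_carrier_mat[OF row_difference_mat_carrier gbinomial_mat_carrier])
  have "det (gbinomial_mat (Suc m) x) = det ?A"
    by (simp add: det_mult[of _ "Suc m"] det_row_difference_mat)
  also have "\<dots> = det (mat_delete ?A 0 0)"
    by (rule det_eq_minor_if_first_col_unit[OF A])
      (simp_all add: row_difference_gbinomial_mat_index del: index_mult_mat(1))
  also have "mat_delete ?A 0 0 = mat m m (\<lambda>(i, k). (x (Suc i) gchoose Suc k) - (x i gchoose Suc k))"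
    by (rule eq_matI)
      (simp_all add: mat_delete_def row_difference_gbinomial_mat_index del: index_mult_mat(1))
  finally show ?thesis .
qed

section \<open>Summation over interlacing rows\<close>

abbreviation interlacing :: "nat \<Rightarrow> (nat \<Rightarrow> int) \<Rightarrow> (nat \<Rightarrow> int) set" where
  "interlacing m c \<equiv> PiE {..<m} (\<lambda>j. {c (Suc j)..c j})"

text \<open>Row \<open>i\<close> of the left-hand matrix depends on \<open>\<mu> i\<close> only, so by multilinearity the sum
  moves into the rows, where it telescopes.\<close>
lemma sum_interlacing_det_gbinomial_mat:
  assumes "\<And>j. j < m \<Longrightarrow> c (Suc j) \<le> c j"
  shows "(\<Sum>\<mu>\<in>interlacing m c.
      det (gbinomial_mat m (\<lambda>i. of_nat i - of_int (\<mu> i) :: 'a::field_char_0))) =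
    det (gbinomial_mat (Suc m) (\<lambda>i. of_nat i - of_int (c i) :: 'a))"
proof -
  let ?B = "interlacing m c"
  let ?x = "\<lambda>i. of_nat i - of_int (c i) :: 'a"
  have "(\<Sum>\<mu>\<in>?B. det (gbinomial_mat m (\<lambda>i. of_nat i - of_int (\<mu> i) :: 'a))) =
      (\<Sum>\<mu>\<in>?B. \<Sum>p | p permutes {0..<m}. signof p * (\<Prod>i<m. (of_nat i - of_int (\<mu> i)) gchoose p i))"
    by (intro sum.cong refl, subst det_def'[OF gbinomial_mat_carrier])
      (auto intro!: sum.cong prod.cong simp: permutes_in_image atLeast0LessThan)
  also have "\<dots> = (\<Sum>p | p permutes {0..<m}.
      signof p * (\<Sum>\<mu>\<in>?B. \<Prod>i<m. (of_nat i - of_int (\<mu> i)) gchoose p i))"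
    by (subst sum.swap) (simp add: sum_distrib_left)
  also have "\<dots> = (\<Sum>p | p permutes {0..<m}.
      signof p * (\<Prod>i<m. (?x (Suc i) gchoose Suc (p i)) - (?x i gchoose Suc (p i))))"
  proof (rule sum.cong[OF refl])
    fix p
    have "(\<Sum>\<mu>\<in>?B. \<Prod>i<m. (of_nat i - of_int (\<mu> i)) gchoose p i) =
        (\<Prod>i<m. \<Sum>t\<in>{c (Suc i)..c i}. (of_nat i - of_int t) gchoose p i)"
      by (rule prod_sum_PiE[symmetric]) auto
    also have "\<dots> = (\<Prod>i<m. (?x (Suc i) gchoose Suc (p i)) - (?x i gchoose Suc (p i)))"
      by (rule prod.cong[OF refl], subst sum_gbinomial_int_interval)
        (use assms in \<open>auto simp: algebra_simps\<close>)
    finally show "signof p * (\<Sum>\<mu>\<in>?B. \<Prod>i<m. (of_nat i - of_int (\<mu> i)) gchoose p i) =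
        signof p * (\<Prod>i<m. (?x (Suc i) gchoose Suc (p i)) - (?x i gchoose Suc (p i)))"
      by simp
  qed
  also have "\<dots> = det (mat m m (\<lambda>(i, k). (?x (Suc i) gchoose Suc k) - (?x i gchoose Suc k)))"
    by (subst det_def'[where n = m]) (auto intro!: sum.cong prod.cong simp: permutes_in_image atLeast0LessThan)
  also have "\<dots> = det (gbinomial_mat (Suc m) ?x)"
    by (rule det_gbinomial_mat_Suc_eq_det_differences[symmetric])
  finally show ?thesis .
qed

text \<open>Weyl's dimension formula for the highest weight \<open>(c 0, \<dots>, c (m - 1))\<close> of \<open>GL m\<close>.\<close>
definition weyl_dim :: "nat \<Rightarrow> (nat \<Rightarrow> int) \<Rightarrow> 'a::field_char_0" where
  "weyl_dim m c = vandermonde_ratio m (\<lambda>i. of_nat i - of_int (c i))"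

lemma sum_interlacing_weyl_dim:
  assumes "\<And>j. j < m \<Longrightarrow> c (Suc j) \<le> c j"
  shows "(\<Sum>\<mu>\<in>interlacing m c. weyl_dim m \<mu>) = (weyl_dim (Suc m) c :: 'a::field_char_0)"
  using sum_interlacing_det_gbinomial_mat[of m c, OF assms]
  by (simp add: weyl_dim_def det_gbinomial_mat_eq_vandermonde_ratio)

section \<open>Gelfand-Tsetlin patterns\<close>

definition unmarked :: "nat \<Rightarrow> (nat \<times> nat) set" where
  "unmarked n = {(i, j). 1 \<le> i \<and> i \<le> j \<and> j \<le> n}"

lemma Pn_diff_An: "Pn n - An n = unmarked n"
  unfolding Pn_def An_def unmarked_def by auto

definition with_marking :: "(nat \<Rightarrow> int) \<Rightarrow> (nat \<times> nat \<Rightarrow> int) \<Rightarrow> nat \<times> nat \<Rightarrow> int" where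
  "with_marking c y p = (if fst p = 0 then c (snd p) else y p)"

lemma with_marking_unmarked: "p \<in> unmarked n \<Longrightarrow> with_marking c y p = y p"
  unfolding with_marking_def unmarked_def by auto

lemma with_marking_An: "p \<in> An n \<Longrightarrow> with_marking c y p = c (snd p)"
  unfolding with_marking_def An_def by auto

lemma lamx_eq_with_marking: "lamx lam x = with_marking (\<lambda>j. int (lam j)) x"
  unfolding lamx_def with_marking_def by auto

text \<open>Gelfand-Tsetlin patterns with top row \<open>c 0, \<dots>, c n\<close>: row \<open>i\<close> consists of the entries
  \<open>y (i, j)\<close>, \<open>i \<le> j \<le> n\<close>, and interlaces with row \<open>i - 1\<close>.\<close>
definition gt_patterns :: "nat \<Rightarrow> (nat \<Rightarrow> int) \<Rightarrow> (nat \<times> nat \<Rightarrow> int) set" where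
  "gt_patterns n c = {y. (\<forall>p. p \<notin> unmarked n \<longrightarrow> y p = 0) \<and>
     (\<forall>i j. 1 \<le> i \<longrightarrow> i \<le> j \<longrightarrow> j \<le> n \<longrightarrow>
        with_marking c y (i - 1, j) \<le> y (i, j) \<and> y (i, j) \<le> with_marking c y (i - 1, j - 1))}"

lemma gt_patternsD:
  assumes "y \<in> gt_patterns n c" "1 \<le> i" "i \<le> j" "j \<le> n"
  shows "with_marking c y (i - 1, j) \<le> y (i, j)" "y (i, j) \<le> with_marking c y (i - 1, j - 1)"
  using assms unfolding gt_patterns_def by auto

lemma gt_patterns_outside: "y \<in> gt_patterns n c \<Longrightarrow> p \<notin> unmarked n \<Longrightarrow> y p = 0"
  unfolding gt_patterns_def by (cases p) auto

lemma gt_patterns_0: "gt_patterns 0 c = {\<lambda>_. 0}"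
  unfolding gt_patterns_def unmarked_def by auto

definition gt_split :: "nat \<Rightarrow> (nat \<times> nat \<Rightarrow> int) \<Rightarrow> (nat \<Rightarrow> int) \<times> (nat \<times> nat \<Rightarrow> int)" where
  "gt_split n y = (restrict (\<lambda>j. y (1, Suc j)) {..<Suc n},
     \<lambda>(i, j). if (i, j) \<in> unmarked n then y (Suc i, Suc j) else 0)"

definition gt_join :: "nat \<Rightarrow> (nat \<Rightarrow> int) \<times> (nat \<times> nat \<Rightarrow> int) \<Rightarrow> nat \<times> nat \<Rightarrow> int" where
  "gt_join n z = (\<lambda>(i, j). if (i, j) \<in> unmarked (Suc n)
     then (if i = 1 then fst z (j - 1) else snd z (i - 1, j - 1)) else 0)"

lemma gt_split_in:
  assumes y: "y \<in> gt_patterns (Suc n) c"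
  shows "gt_split n y \<in> Sigma (interlacing (Suc n) c) (gt_patterns n)"
proof -
  let ?\<mu> = "restrict (\<lambda>j. y (1, Suc j)) {..<Suc n}"
  let ?y' = "\<lambda>(i, j). if (i, j) \<in> unmarked n then y (Suc i, Suc j) else 0"
  have "?\<mu> \<in> interlacing (Suc n) c"
  proof (rule PiE_I)
    fix j assume "j \<in> {..<Suc n}"
    then show "?\<mu> j \<in> {c (Suc j)..c j}"
      using gt_patternsD[OF y, of 1 "Suc j"] by (simp add: with_marking_def)
  qed auto
  moreover have "?y' \<in> gt_patterns n ?\<mu>"
    unfolding gt_patterns_def
  proof (intro CollectI conjI allI impI)
    fix p assume "p \<notin> unmarked n"
    then show "?y' p = 0" by (cases p) auto
  next
    fix i j assume ij: "1 \<le> (i::nat)" "i \<le> j" "j \<le> n"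
    have "(i, j) \<in> unmarked n" "(i - 1 \<noteq> 0) = ((i - 1, j) \<in> unmarked n)"
        "(i - 1 \<noteq> 0) = ((i - 1, j - 1) \<in> unmarked n)"
      using ij by (auto simp: unmarked_def)
    moreover have "j - 1 < Suc n" "Suc (j - 1) = j" "Suc (i - 1) = i"
      using ij by auto
    ultimately show "with_marking ?\<mu> ?y' (i - 1, j) \<le> ?y' (i, j)"
        "?y' (i, j) \<le> with_marking ?\<mu> ?y' (i - 1, j - 1)"
      using gt_patternsD[OF y, of "Suc i" "Suc j"] ij by (auto simp: with_marking_def)
  qed
  ultimately show ?thesis
    unfolding gt_split_def by simp
qed

lemma gt_join_in:
  assumes "z \<in> Sigma (interlacing (Suc n) c) (gt_patterns n)"
  shows "gt_join n z \<in> gt_patterns (Suc n) c"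
proof -
  obtain \<mu> y' where z: "z = (\<mu>, y')" and \<mu>: "\<mu> \<in> interlacing (Suc n) c"
    and y': "y' \<in> gt_patterns n \<mu>"
    using assms by auto
  have join: "gt_join n z (i, j) = (if (i, j) \<in> unmarked (Suc n)
      then (if i = 1 then \<mu> (j - 1) else y' (i - 1, j - 1)) else 0)" for i j
    unfolding gt_join_def z by simp
  show ?thesis
    unfolding gt_patterns_def
  proof (intro CollectI conjI allI impI)
    fix p assume "p \<notin> unmarked (Suc n)"
    then show "gt_join n z p = 0" by (cases p) (simp add: join)
  next
    fix i j assume ij: "1 \<le> (i::nat)" "i \<le> j" "j \<le> Suc n"
    have "with_marking c (gt_join n z) (i - 1, j) \<le> gt_join n z (i, j) \<and>
        gt_join n z (i, j) \<le> with_marking c (gt_join n z) (i - 1, j - 1)"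
    proof (cases "i = 1")
      case True
      have "j - 1 < Suc n" "Suc (j - 1) = j"
        using ij by auto
      then have "\<mu> (j - 1) \<in> {c j..c (j - 1)}"
        using \<mu> by (metis PiE_mem lessThan_iff)
      then show ?thesis
        using True ij by (simp add: join with_marking_def unmarked_def)
    next
      case False
      then have sub: "1 \<le> i - 1" "i - 1 \<le> j - 1" "j - 1 \<le> n"
        using ij by auto
      have "(i - 1, j) \<in> unmarked (Suc n)" "(i - 1, j - 1) \<in> unmarked (Suc n)"
        using ij False by (auto simp: unmarked_def)
      then have "with_marking c (gt_join n z) (i - 1, j) = with_marking \<mu> y' (i - 1 - 1, j - 1)"
          "with_marking c (gt_join n z) (i - 1, j - 1) = with_marking \<mu> y' (i - 1 - 1, j - 1 - 1)"
        using False ij by (auto simp: join with_marking_def)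
      moreover have "gt_join n z (i, j) = y' (i - 1, j - 1)"
        using False ij by (simp add: join unmarked_def)
      ultimately show ?thesis
        using gt_patternsD[OF y' sub] by simp
    qed
    then show "with_marking c (gt_join n z) (i - 1, j) \<le> gt_join n z (i, j)"
        "gt_join n z (i, j) \<le> with_marking c (gt_join n z) (i - 1, j - 1)"
      by auto
  qed
qed

lemma gt_split_join:
  assumes "z \<in> Sigma (interlacing (Suc n) c) (gt_patterns n)"
  shows "gt_split n (gt_join n z) = z"
proof -
  obtain \<mu> y' where z: "z = (\<mu>, y')" and \<mu>: "\<mu> \<in> interlacing (Suc n) c"
    and y': "y' \<in> gt_patterns n \<mu>"
    using assms by auto
  have "restrict (\<lambda>j. gt_join n z (1, Suc j)) {..<Suc n} = \<mu>"
    using \<mu> by (auto simp: gt_join_def z unmarked_def PiE_def extensional_def)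
  moreover have "(\<lambda>(i, j). if (i, j) \<in> unmarked n then gt_join n z (Suc i, Suc j) else 0) = y'"
    using gt_patterns_outside[OF y'] by (auto simp: gt_join_def z unmarked_def)
  ultimately show ?thesis
    unfolding gt_split_def z by simp
qed

lemma gt_join_split:
  assumes y: "y \<in> gt_patterns (Suc n) c"
  shows "gt_join n (gt_split n y) = y"
proof
  fix p
  show "gt_join n (gt_split n y) p = y p"
  proof (cases p)
    case (Pair i j)
    show ?thesis
    proof (cases "(i, j) \<in> unmarked (Suc n)")
      case True
      then have "i = 1 \<Longrightarrow> j - 1 < Suc n" "Suc (j - 1) = j"
        "i \<noteq> 1 \<Longrightarrow> (i - 1, j - 1) \<in> unmarked n \<and> Suc (i - 1) = i"
        by (auto simp: unmarked_def)
      then show ?thesis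
        using Pair True by (auto simp: gt_join_def gt_split_def)
    qed (use Pair gt_patterns_outside[OF y] in \<open>simp add: gt_join_def\<close>)
  qed
qed

lemma bij_betw_gt_join:
  "bij_betw (gt_join n) (Sigma (interlacing (Suc n) c) (gt_patterns n)) (gt_patterns (Suc n) c)"
proof (rule bij_betw_byWitness[where f' = "gt_split n"])
  show "\<forall>z\<in>Sigma (interlacing (Suc n) c) (gt_patterns n). gt_split n (gt_join n z) = z"
    using gt_split_join by blast
  show "\<forall>y\<in>gt_patterns (Suc n) c. gt_join n (gt_split n y) = y"
    using gt_join_split by blast
  show "gt_join n ` Sigma (interlacing (Suc n) c) (gt_patterns n) \<subseteq> gt_patterns (Suc n) c"
    using gt_join_in by blast
  show "gt_split n ` gt_patterns (Suc n) c \<subseteq> Sigma (interlacing (Suc n) c) (gt_patterns n)"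
    using gt_split_in by blast
qed

theorem card_gt_patterns:
  assumes "\<And>j. j < n \<Longrightarrow> c (Suc j) \<le> c j"
  shows "finite (gt_patterns n c) \<and> of_nat (card (gt_patterns n c)) = (weyl_dim (Suc n) c :: 'a::field_char_0)"
  using assms
proof (induction n arbitrary: c)
  case 0
  have "weyl_dim (Suc 0) c = (1 :: 'a)"
    unfolding weyl_dim_def vandermonde_ratio_def by (rule prod.neutral) auto
  then show ?case
    by (simp add: gt_patterns_0)
next
  case (Suc n)
  have IH: "finite (gt_patterns n \<mu>) \<and> of_nat (card (gt_patterns n \<mu>)) = (weyl_dim (Suc n) \<mu> :: 'a)"
    if "\<mu> \<in> interlacing (Suc n) c" for \<mu>
  proof (rule Suc.IH)
    fix j assume "j < n"
    then have "\<mu> (Suc j) \<in> {c (Suc (Suc j))..c (Suc j)}" "\<mu> j \<in> {c (Suc j)..c j}"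
      using that by (auto simp: PiE_def Pi_def)
    then show "\<mu> (Suc j) \<le> \<mu> j"
      by auto
  qed
  let ?S = "Sigma (interlacing (Suc n) c) (gt_patterns n)"
  have fin_interlacing: "finite (interlacing (Suc n) c)"
    by (rule finite_PiE) auto
  then have fin: "finite ?S"
    using IH by (intro finite_SigmaI) auto
  have "of_nat (card (gt_patterns (Suc n) c)) = (of_nat (card ?S) :: 'a)"
    using bij_betw_same_card[OF bij_betw_gt_join] by simp
  also have "\<dots> = (\<Sum>\<mu>\<in>interlacing (Suc n) c. of_nat (card (gt_patterns n \<mu>)))"
    using fin_interlacing IH by (subst card_SigmaI) auto
  also have "\<dots> = (\<Sum>\<mu>\<in>interlacing (Suc n) c. weyl_dim (Suc n) \<mu>)"
    using IH by (intro sum.cong) auto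
  also have "\<dots> = weyl_dim (Suc (Suc n)) c"
    by (rule sum_interlacing_weyl_dim) (use Suc.prems in auto)
  finally show ?case
    using fin bij_betw_finite[OF bij_betw_gt_join] by simp
qed

lemma cover_cases:
  assumes "cover n q (i, j)"
  obtains "1 \<le> i" "i \<le> j" "j \<le> n" "q = (i - 1, j)"
    | "i \<le> j" "j < n" "q = (Suc i, Suc j)"
  using assms unfolding cover_def
proof (elim exE conjE disjE)
  fix i' j' assume "1 \<le> i'" "i' \<le> j'" "j' \<le> n" "q = (i' - 1, j')" "(i, j) = (i', j')"
  then show thesis
    using that(1) by simp
next
  fix i' j' assume h: "1 \<le> i'" "i' \<le> j'" "j' \<le> n" "q = (i', j')" "(i, j) = (i' - 1, j' - 1)"
  then have "i' = Suc i" "j' = Suc j"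
    by auto
  then show thesis
    using h that(2) by simp
qed

lemma cover_Pn: "cover n q p \<Longrightarrow> q \<in> Pn n \<and> p \<in> Pn n"
  unfolding cover_def Pn_def by auto

lemma cover_down: "1 \<le> i \<Longrightarrow> i \<le> j \<Longrightarrow> j \<le> n \<Longrightarrow> cover n (i - 1, j) (i, j)"
  unfolding cover_def by auto

lemma cover_diag: "1 \<le> i \<Longrightarrow> i \<le> j \<Longrightarrow> j \<le> n \<Longrightarrow> cover n (i, j) (i - 1, j - 1)"
  unfolding cover_def by blast

lemma cover_An_or_unmarked: "cover n q p \<Longrightarrow> q \<in> An n \<or> q \<in> unmarked n"
  using cover_Pn Pn_diff_An by blast

lemma cover_not_both_An: "cover n q p \<Longrightarrow> q \<in> An n \<Longrightarrow> p \<in> An n \<Longrightarrow> False"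
  unfolding cover_def An_def by auto

lemma cover_imp_prec: "cover n q p \<Longrightarrow> prec n q p"
  unfolding prec_def by auto

lemma prec_trans: "prec n a b \<Longrightarrow> prec n b c \<Longrightarrow> prec n a c"
  unfolding prec_def by auto

lemma prec_last_cover:
  assumes "prec n q p"
  obtains r where "cover n r p" "r = q \<or> prec n q r"
  using assms unfolding prec_def by (cases rule: tranclp.cases) auto

lemma prec_marked_below: "1 \<le> i \<Longrightarrow> i \<le> j \<Longrightarrow> j \<le> n \<Longrightarrow> prec n (0, j) (i, j)"
proof (induction i)
  case (Suc i)
  then have "cover n (i, j) (Suc i, j)"
    using cover_down[of "Suc i" j n] by simp
  then show ?case
    using Suc by (cases "i = 0") (auto intro: cover_imp_prec prec_trans)
qed simp

definition poset_rank :: "nat \<Rightarrow> nat \<times> nat \<Rightarrow> nat" where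
  "poset_rank n p = 2 * n + fst p - 2 * snd p"

lemma cover_poset_rank_less: "cover n q p \<Longrightarrow> poset_rank n q < poset_rank n p"
  unfolding cover_def poset_rank_def by auto

lemma gt_patterns_cover_mono:
  assumes y: "y \<in> gt_patterns n c" and "cover n q p"
  shows "with_marking c y q \<le> with_marking c y p"
  using assms(2) unfolding cover_def
proof (elim exE conjE disjE)
  fix i j assume "1 \<le> i" "i \<le> j" "j \<le> n" "q = (i - 1, j)" "p = (i, j)"
  then show ?thesis
    using gt_patternsD(1)[OF y] by (simp add: with_marking_def)
next
  fix i j assume "1 \<le> i" "i \<le> j" "j \<le> n" "q = (i, j)" "p = (i - 1, j - 1)"
  then show ?thesis
    using gt_patternsD(2)[OF y] by (simp add: with_marking_def)
qed

lemma gt_patterns_prec_mono: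
  assumes "y \<in> gt_patterns n c" "prec n q p"
  shows "with_marking c y q \<le> with_marking c y p"
  using assms(2) unfolding prec_def
  by (induction rule: tranclp_induct) (use gt_patterns_cover_mono[OF assms(1)] in fastforce)+

definition max_lower_cover ::
    "nat \<Rightarrow> (nat \<Rightarrow> int) \<Rightarrow> (nat \<times> nat \<Rightarrow> int) \<Rightarrow> nat \<times> nat \<Rightarrow> int" where
  "max_lower_cover n c y p =
     (if snd p < n then max (with_marking c y (fst p - 1, snd p)) (with_marking c y (Suc (fst p), Suc (snd p)))
      else with_marking c y (fst p - 1, snd p))"

lemma le_max_lower_cover: "cover n q p \<Longrightarrow> with_marking c y q \<le> max_lower_cover n c y p"
  by (cases p) (auto elim: cover_cases simp: max_lower_cover_def)

lemma max_lower_cover_attained: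
  assumes "p \<in> unmarked n"
  obtains q where "cover n q p" "max_lower_cover n c y p = with_marking c y q"
proof -
  obtain i j where p: "p = (i, j)" and ij: "1 \<le> i" "i \<le> j" "j \<le> n"
    using assms by (auto simp: unmarked_def)
  show ?thesis
  proof (cases "j < n")
    case True
    then have "cover n (Suc i, Suc j) (i, j)"
      using cover_diag[of "Suc i" "Suc j" n] ij by simp
    then show ?thesis
      using that cover_down[OF ij] True unfolding p max_lower_cover_def
      by (cases "with_marking c y (i - 1, j) \<le> with_marking c y (Suc i, Suc j)") (auto simp: max_def)
  next
    case False
    then show ?thesis
      using that cover_down[OF ij] unfolding p max_lower_cover_def by auto
  qed
qed

lemma max_lower_cover_cong:
  assumes "p \<in> unmarked n" and "\<And>q. cover n q p \<Longrightarrow> with_marking c y q = with_marking c z q"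
  shows "max_lower_cover n c y p = max_lower_cover n c z p"
proof -
  obtain i j where p: "p = (i, j)" and ij: "1 \<le> i" "i \<le> j" "j \<le> n"
    using assms(1) by (auto simp: unmarked_def)
  have "j < n \<Longrightarrow> cover n (Suc i, Suc j) (i, j)"
    using cover_diag[of "Suc i" "Suc j" n] ij by simp
  then show ?thesis
    using assms(2) cover_down[OF ij] unfolding p max_lower_cover_def by auto
qed

section \<open>The transfer map\<close>

definition transfer ::
    "nat \<Rightarrow> (nat \<times> nat) set \<Rightarrow> (nat \<Rightarrow> int) \<Rightarrow> (nat \<times> nat \<Rightarrow> int) \<Rightarrow> nat \<times> nat \<Rightarrow> int" where
  "transfer n U2 c y p =
     (if p \<in> unmarked n then y p - (if p \<in> U2 then max_lower_cover n c y p else 0) else 0)"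

text \<open>The recursion \<open>x p + max_lower_cover n c (transfer_inv n U2 c x) p\<close> on \<open>U2\<close>, with
  \<open>max_lower_cover\<close> unfolded so that the function package sees the recursive calls.\<close>
function transfer_inv ::
    "nat \<Rightarrow> (nat \<times> nat) set \<Rightarrow> (nat \<Rightarrow> int) \<Rightarrow> (nat \<times> nat \<Rightarrow> int) \<Rightarrow> nat \<times> nat \<Rightarrow> int" where
  "transfer_inv n U2 c x (i, j) = (if 1 \<le> i \<and> i \<le> j \<and> j \<le> n then
     (if (i, j) \<in> U2 then x (i, j) +
        (if j < n then max (if i - 1 = 0 then c j else transfer_inv n U2 c x (i - 1, j))
                         (transfer_inv n U2 c x (Suc i, Suc j))
         else (if i - 1 = 0 then c j else transfer_inv n U2 c x (i - 1, j)))
      else x (i, j)) else 0)"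
  by pat_completeness auto
termination
  by (relation "measure (\<lambda>(n, U2, c, x, p). poset_rank n p)") (auto simp: poset_rank_def)

declare transfer_inv.simps [simp del]

lemma transfer_inv_unmarked:
  assumes "p \<in> unmarked n"
  shows "transfer_inv n U2 c x p =
    x p + (if p \<in> U2 then max_lower_cover n c (transfer_inv n U2 c x) p else 0)"
proof -
  obtain i j where p: "p = (i, j)"
    by (cases p)
  show ?thesis
    using assms unfolding p
    by (subst transfer_inv.simps) (auto simp: unmarked_def max_lower_cover_def with_marking_def)
qed

lemma transfer_inv_outside:
  assumes "p \<notin> unmarked n"
  shows "transfer_inv n U2 c x p = 0"
proof -
  obtain i j where p: "p = (i, j)"
    by (cases p)
  show ?thesis
    using assms unfolding p by (subst transfer_inv.simps) (auto simp: unmarked_def)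
qed

text \<open>The recursion defining \<open>transfer_inv\<close> has a unique solution, because the lower covers of
  an unmarked point are marked or of smaller rank.\<close>
lemma transfer_inv_unique:
  assumes outside: "\<And>p. p \<notin> unmarked n \<Longrightarrow> z p = 0"
    and rec: "\<And>p. p \<in> unmarked n \<Longrightarrow> z p = x p + (if p \<in> U2 then max_lower_cover n c z p else 0)"
  shows "transfer_inv n U2 c x = z"
proof
  fix p
  show "transfer_inv n U2 c x p = z p"
  proof (induction p rule: measure_induct_rule[of "poset_rank n"])
    case (less p)
    show ?case
    proof (cases "p \<in> unmarked n")
      case True
      have "with_marking c (transfer_inv n U2 c x) q = with_marking c z q" if "cover n q p" for q
        using less[OF cover_poset_rank_less[OF that]] by (simp add: with_marking_def)
      then show ?thesis
        using rec[OF True] transfer_inv_unmarked[OF True] max_lower_cover_cong[OF True] by metis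
    qed (simp add: outside transfer_inv_outside)
  qed
qed

lemma transfer_inv_transfer:
  "(\<And>p. p \<notin> unmarked n \<Longrightarrow> y p = 0) \<Longrightarrow> transfer_inv n U2 c (transfer n U2 c y) = y"
  by (rule transfer_inv_unique) (auto simp: transfer_def)

lemma transfer_transfer_inv:
  "(\<And>p. p \<notin> unmarked n \<Longrightarrow> x p = 0) \<Longrightarrow> transfer n U2 c (transfer_inv n U2 c x) = x"
  by (auto simp: transfer_def transfer_inv_unmarked)

lemma lamx_An: "a \<in> An n \<Longrightarrow> lamx lam x a = of_nat (lam (snd a))"
  unfolding lamx_def An_def by auto

lemma lamx_unmarked: "p \<in> unmarked n \<Longrightarrow> lamx lam x p = x p"
  unfolding lamx_def unmarked_def by auto

lemma in_CO_outside: "in_CO n U1 U2 lam x \<Longrightarrow> p \<notin> unmarked n \<Longrightarrow> x p = 0"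
  unfolding in_CO_def Pn_diff_An by (elim conjE) (erule allE[of _ p], simp)

lemma in_CO_nonneg: "in_CO n U1 U2 lam x \<Longrightarrow> p \<in> U2 \<Longrightarrow> 0 \<le> x p"
  unfolding in_CO_def by (elim conjE) simp

lemma in_CO_chain_le:
  assumes "in_CO n U1 U2 lam x" "a \<in> An n \<union> U1" "b \<in> An n \<union> U1" "ps \<noteq> []" "set ps \<subseteq> U2"
    "sorted_wrt (\<lambda>u v. prec n v u) ps" "prec n (hd ps) a" "prec n b (last ps)"
  shows "sum_list (map x ps) \<le> lamx lam x a - lamx lam x b"
  using assms(1) unfolding in_CO_def
proof (elim conjE)
  assume "\<forall>a\<in>An n \<union> U1. \<forall>b\<in>An n \<union> U1. \<forall>ps. ps \<noteq> [] \<and> set ps \<subseteq> U2 \<and>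
      sorted_wrt (\<lambda>u v. prec n v u) ps \<and> prec n (hd ps) a \<and> prec n b (last ps)
      \<longrightarrow> sum_list (map x ps) \<le> lamx lam x a - lamx lam x b"
  then show ?thesis
    using assms(2-) by blast
qed

locale admissible_decomposition =
  fixes n :: nat and U1 U2 :: "(nat \<times> nat) set" and lam :: "nat \<Rightarrow> nat"
  assumes admissible: "admissible n U1 U2"
begin

abbreviation \<phi> :: "(nat \<times> nat \<Rightarrow> int) \<Rightarrow> nat \<times> nat \<Rightarrow> int" where
  "\<phi> \<equiv> transfer n U2 (\<lambda>j. int (lam j))"

abbreviation \<psi> :: "(nat \<times> nat \<Rightarrow> int) \<Rightarrow> nat \<times> nat \<Rightarrow> int" where
  "\<psi> \<equiv> transfer_inv n U2 (\<lambda>j. int (lam j))"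

lemma U1_U2_disjoint: "U1 \<inter> U2 = {}"
  and U1_Un_U2: "U1 \<union> U2 = unmarked n"
  and not_prec_U1_U2: "u1 \<in> U1 \<Longrightarrow> u2 \<in> U2 \<Longrightarrow> \<not> prec n u1 u2"
  using admissible unfolding admissible_def Pn_diff_An by auto

lemma U1_unmarked: "p \<in> U1 \<Longrightarrow> p \<in> unmarked n"
  and U2_unmarked: "p \<in> U2 \<Longrightarrow> p \<in> unmarked n"
  and U1_not_U2: "p \<in> U1 \<Longrightarrow> p \<notin> U2"
  using U1_U2_disjoint U1_Un_U2 by auto

lemma lamx_U1: "p \<in> U1 \<Longrightarrow> lamx lam x p = x p"
  by (rule lamx_unmarked[OF U1_unmarked])

lemma gt_patterns_prec_mono_lamx:
  "y \<in> gt_patterns n (\<lambda>j. int (lam j)) \<Longrightarrow> prec n q p \<Longrightarrow> lamx lam y q \<le> lamx lam y p"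
  unfolding lamx_eq_with_marking by (rule gt_patterns_prec_mono)

lemma transfer_U1: "p \<in> U1 \<Longrightarrow> \<phi> y p = y p"
  by (simp add: transfer_def U1_unmarked U1_not_U2)

lemma transfer_U2: "p \<in> U2 \<Longrightarrow> \<phi> y p = y p - max_lower_cover n (\<lambda>j. int (lam j)) y p"
  by (simp add: transfer_def U2_unmarked)

lemma lamx_transfer:
  assumes "a \<in> An n \<union> U1"
  shows "lamx lam (\<phi> y) a = lamx lam y a"
proof (cases "a \<in> U1")
  case True
  then show ?thesis
    by (simp add: lamx_U1 transfer_U1)
next
  case False
  then have "a \<in> An n"
    using assms by blast
  then show ?thesis
    by (simp add: lamx_An[OF \<open>a \<in> An n\<close>])
qed

lemma transfer_nonneg:
  assumes y: "y \<in> gt_patterns n (\<lambda>j. int (lam j))" and p: "p \<in> U2"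
  shows "0 \<le> \<phi> y p"
proof -
  obtain q where q: "cover n q p"
    and max: "max_lower_cover n (\<lambda>j. int (lam j)) y p = with_marking (\<lambda>j. int (lam j)) y q"
    using max_lower_cover_attained[OF U2_unmarked[OF p]] .
  have "with_marking (\<lambda>j. int (lam j)) y q \<le> with_marking (\<lambda>j. int (lam j)) y p"
    by (rule gt_patterns_cover_mono[OF y q])
  also have "\<dots> = y p"
    by (rule with_marking_unmarked[OF U2_unmarked[OF p]])
  finally show ?thesis
    using p max by (simp add: transfer_U2)
qed

lemma transfer_le_diff:
  assumes y: "y \<in> gt_patterns n (\<lambda>j. int (lam j))" and p: "p \<in> U2" and "prec n q p"
  shows "\<phi> y p \<le> lamx lam y p - lamx lam y q"
proof -
  obtain r where r: "cover n r p" "r = q \<or> prec n q r"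
    using prec_last_cover[OF \<open>prec n q p\<close>] .
  have "lamx lam y q \<le> lamx lam y r"
    using r(2) gt_patterns_prec_mono_lamx[OF y] by blast
  also have "\<dots> \<le> max_lower_cover n (\<lambda>j. int (lam j)) y p"
    using le_max_lower_cover[OF r(1)] by (simp add: lamx_eq_with_marking)
  moreover have "lamx lam y p = y p"
    by (rule lamx_unmarked[OF U2_unmarked[OF p]])
  ultimately show ?thesis
    using p by (simp add: transfer_U2)
qed

lemma transfer_chain_sum_le:
  assumes y: "y \<in> gt_patterns n (\<lambda>j. int (lam j))"
  shows "ps \<noteq> [] \<Longrightarrow> set ps \<subseteq> U2 \<Longrightarrow> sorted_wrt (\<lambda>u v. prec n v u) ps \<Longrightarrow>
    prec n b (last ps) \<Longrightarrow>
    sum_list (map (\<phi> y) ps) \<le> lamx lam y (hd ps) - lamx lam y b"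
proof (induction ps)
  case (Cons p ps)
  show ?case
  proof (cases "ps = []")
    case True
    then show ?thesis
      using Cons.prems transfer_le_diff[OF y, of p b] by simp
  next
    case False
    then have "prec n (hd ps) p"
      using Cons.prems(3) by simp
    then have "\<phi> y p \<le> lamx lam y p - lamx lam y (hd ps)"
      using transfer_le_diff[OF y] Cons.prems(2) by simp
    then show ?thesis
      using Cons False by simp
  qed
qed simp

text \<open>The chain is extended downwards to the marked point \<open>(0, j)\<close> below its first element, whose
  value is nonnegative.\<close>
lemma transfer_chain_sum_le_U1:
  assumes y: "y \<in> gt_patterns n (\<lambda>j. int (lam j))" and q: "q \<in> U1"
    and ps: "ps \<noteq> []" "set ps \<subseteq> U2" "sorted_wrt (prec n) ps" "prec n (last ps) q"
  shows "sum_list (map (\<phi> y) ps) \<le> \<phi> y q"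
proof -
  obtain i j where hd: "hd ps = (i, j)"
    by (cases "hd ps")
  have "hd ps \<in> U2"
    using ps hd_in_set by blast
  then have ij: "1 \<le> i" "i \<le> j" "j \<le> n"
    using U2_unmarked unfolding hd by (auto simp: unmarked_def)
  have "prec n (0, j) (last (rev ps))"
    using ps prec_marked_below[OF ij] by (simp add: last_rev hd)
  then have "sum_list (map (\<phi> y) (rev ps)) \<le> lamx lam y (hd (rev ps)) - lamx lam y (0, j)"
    using ps by (intro transfer_chain_sum_le[OF y]) (auto simp: sorted_wrt_rev)
  then have "sum_list (map (\<phi> y) ps) \<le> lamx lam y (last ps) - lamx lam y (0, j)"
    by (simp only: rev_map[symmetric] sum_list_rev hd_rev)
  moreover have "lamx lam y (last ps) \<le> lamx lam y q"
    using gt_patterns_prec_mono_lamx[OF y] ps by blast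
  moreover have "0 \<le> lamx lam y (0, j)"
    by (simp add: lamx_def)
  moreover have "lamx lam y q = \<phi> y q"
    using q by (simp add: lamx_U1 transfer_U1)
  ultimately show ?thesis
    by linarith
qed

lemma transfer_in_CO:
  assumes y: "y \<in> gt_patterns n (\<lambda>j. int (lam j))"
  shows "in_CO n U1 U2 lam (\<phi> y)"
proof -
  have mono: "lamx lam (\<phi> y) a \<le> lamx lam (\<phi> y) b"
    if "a \<in> An n \<union> U1" "b \<in> An n \<union> U1" "prec n a b" for a b
    using that gt_patterns_prec_mono_lamx[OF y] by (simp add: lamx_transfer)
  have chain_down: "sum_list (map (\<phi> y) ps) \<le> lamx lam (\<phi> y) a - lamx lam (\<phi> y) b"
    if "a \<in> An n \<union> U1" "b \<in> An n \<union> U1" "ps \<noteq> []" "set ps \<subseteq> U2"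
      "sorted_wrt (\<lambda>u v. prec n v u) ps" "prec n (hd ps) a" "prec n b (last ps)" for a b ps
    using that transfer_chain_sum_le[OF y, of ps b] gt_patterns_prec_mono_lamx[OF y, of "hd ps" a]
    by (simp add: lamx_transfer)
  show ?thesis
    unfolding in_CO_def
  proof (intro conjI ballI allI impI)
    fix p assume "p \<notin> Pn n - An n"
    then show "\<phi> y p = 0"
      by (simp add: transfer_def Pn_diff_An)
  next
    fix p a assume "p \<in> U1" "a \<in> An n" "prec n p a"
    then show "\<phi> y p \<le> of_nat (lam (snd a))"
      using mono[of p a] by (simp add: lamx_An lamx_U1)
  next
    fix q b assume "q \<in> U1" "b \<in> An n" "prec n b q"
    then show "of_nat (lam (snd b)) \<le> \<phi> y q"
      using mono[of b q] by (simp add: lamx_An lamx_U1)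
  next
    fix p q assume "p \<in> U1" "q \<in> U1" "prec n p q"
    then show "\<phi> y p \<le> \<phi> y q"
      using mono[of p q] by (simp add: lamx_U1)
  next
    fix p assume "p \<in> U2"
    then show "0 \<le> \<phi> y p"
      by (rule transfer_nonneg[OF y])
  next
    fix a b ps
    assume "a \<in> An n \<union> U1" "b \<in> An n \<union> U1" "ps \<noteq> [] \<and> set ps \<subseteq> U2 \<and>
      sorted_wrt (\<lambda>u v. prec n v u) ps \<and> prec n (hd ps) a \<and> prec n b (last ps)"
    then show "sum_list (map (\<phi> y) ps) \<le> lamx lam (\<phi> y) a - lamx lam (\<phi> y) b"
      using chain_down by blast
  next
    fix q ps
    assume "q \<in> U1" "ps \<noteq> [] \<and> set ps \<subseteq> U2 \<and> sorted_wrt (prec n) ps \<and> prec n (last ps) q"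
    then show "sum_list (map (\<phi> y) ps) \<le> \<phi> y q"
      using transfer_chain_sum_le_U1[OF y] by blast
  qed
qed


lemma in_CO_mono_marked:
  assumes x: "in_CO n U1 U2 lam x" and a: "a \<in> An n \<union> U1" and b: "b \<in> An n \<union> U1"
    and not_An: "\<not> (a \<in> An n \<and> b \<in> An n)" and ab: "prec n a b"
  shows "lamx lam x a \<le> lamx lam x b"
  using x unfolding in_CO_def
proof (elim conjE)
  assume below_An: "\<forall>p\<in>U1. \<forall>a\<in>An n. prec n p a \<longrightarrow> x p \<le> of_nat (lam (snd a))"
    and above_An: "\<forall>q\<in>U1. \<forall>b\<in>An n. prec n b q \<longrightarrow> of_nat (lam (snd b)) \<le> x q"
    and within_U1: "\<forall>p\<in>U1. \<forall>q\<in>U1. prec n p q \<longrightarrow> x p \<le> x q"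
  consider "a \<in> U1" "b \<in> An n" | "a \<in> An n" "b \<in> U1" | "a \<in> U1" "b \<in> U1"
    using a b not_An by blast
  then show ?thesis
  proof cases
    case 1
    then show ?thesis
      using below_An ab by (simp add: lamx_U1 lamx_An)
  next
    case 2
    then show ?thesis
      using above_An ab by (simp add: lamx_U1 lamx_An)
  next
    case 3
    then show ?thesis
      using within_U1 ab by (simp add: lamx_U1)
  qed
qed

lemma transfer_inv_U1: "p \<in> U1 \<Longrightarrow> \<psi> x p = x p"
  by (simp add: transfer_inv_unmarked U1_unmarked U1_not_U2)

lemma transfer_inv_U2: "p \<in> U2 \<Longrightarrow> \<psi> x p = x p + max_lower_cover n (\<lambda>j. int (lam j)) (\<psi> x) p"
  by (simp add: transfer_inv_unmarked U2_unmarked)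

lemma lamx_transfer_inv: "a \<in> An n \<union> U1 \<Longrightarrow> lamx lam (\<psi> x) a = lamx lam x a"
  by (auto simp: lamx_U1 transfer_inv_U1 lamx_def An_def)

text \<open>Unfolding the recursion for \<open>\<psi>\<close> along lower covers realising the maximum yields a chain in
  \<open>U2\<close> that starts at \<open>q\<close> and ends above a marked point; it stays in \<open>U2\<close> because no point of \<open>U1\<close>
  lies below a point of \<open>U2\<close>.\<close>
lemma transfer_inv_chain:
  assumes "q \<in> U2"
  shows "\<exists>ps b. ps \<noteq> [] \<and> set ps \<subseteq> U2 \<and> sorted_wrt (\<lambda>u v. prec n v u) ps \<and> hd ps = q \<and>
    b \<in> An n \<and> prec n b (last ps) \<and> \<psi> x q = int (lam (snd b)) + sum_list (map x ps)"
  using assms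
proof (induction q rule: measure_induct_rule[of "poset_rank n"])
  case (less q)
  obtain r where r: "cover n r q"
    and max: "max_lower_cover n (\<lambda>j. int (lam j)) (\<psi> x) q = with_marking (\<lambda>j. int (lam j)) (\<psi> x) r"
    using max_lower_cover_attained[OF U2_unmarked[OF less.prems]] .
  have \<psi>q: "\<psi> x q = x q + with_marking (\<lambda>j. int (lam j)) (\<psi> x) r"
    using transfer_inv_U2[OF less.prems] max by simp
  show ?case
  proof (cases "r \<in> An n")
    case True
    then show ?thesis
      using \<psi>q r less.prems
      by (intro exI[of _ "[q]"] exI[of _ r]) (auto simp: with_marking_An cover_imp_prec)
  next
    case False
    then have "r \<in> unmarked n"
      using cover_An_or_unmarked[OF r] by blast
    moreover have "r \<notin> U1"
      using not_prec_U1_U2[OF _ less.prems] cover_imp_prec[OF r] by blast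
    ultimately have rU2: "r \<in> U2"
      using U1_Un_U2 by blast
    obtain ps b where ps: "ps \<noteq> []" "set ps \<subseteq> U2" "sorted_wrt (\<lambda>u v. prec n v u) ps" "hd ps = r"
      "b \<in> An n" "prec n b (last ps)" "\<psi> x r = int (lam (snd b)) + sum_list (map x ps)"
      using less.IH[OF cover_poset_rank_less[OF r] rU2] by blast
    have below_q: "prec n v q" if "v \<in> set ps" for v
    proof -
      obtain rest where "ps = r # rest"
        using ps(1,4) by (cases ps) auto
      then have "v = r \<or> prec n v r"
        using that ps(3) by auto
      then show ?thesis
        using cover_imp_prec[OF r] prec_trans by blast
    qed
    show ?thesis
      using ps below_q \<psi>q less.prems with_marking_unmarked[OF \<open>r \<in> unmarked n\<close>]
      by (intro exI[of _ "q # ps"] exI[of _ b]) auto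
  qed
qed

lemma transfer_inv_cover_mono:
  assumes x: "in_CO n U1 U2 lam x" and qp: "cover n q p"
  shows "lamx lam (\<psi> x) q \<le> lamx lam (\<psi> x) p"
proof (cases "p \<in> U2")
  case True
  have "lamx lam (\<psi> x) q \<le> max_lower_cover n (\<lambda>j. int (lam j)) (\<psi> x) p"
    using le_max_lower_cover[OF qp] by (simp add: lamx_eq_with_marking)
  also have "\<dots> \<le> \<psi> x p"
    using transfer_inv_U2[OF True] in_CO_nonneg[OF x True] by simp
  finally show ?thesis
    by (simp add: lamx_unmarked[OF U2_unmarked[OF True]])
next
  case False
  then have p: "p \<in> An n \<union> U1"
    using cover_Pn[OF qp] Pn_diff_An U1_Un_U2 by blast
  show ?thesis
  proof (cases "q \<in> U2")
    case True
    then obtain ps b where ps: "ps \<noteq> []" "set ps \<subseteq> U2" "sorted_wrt (\<lambda>u v. prec n v u) ps" "hd ps = q"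
      "b \<in> An n" "prec n b (last ps)" "\<psi> x q = int (lam (snd b)) + sum_list (map x ps)"
      using transfer_inv_chain by blast
    have "sum_list (map x ps) \<le> lamx lam x p - lamx lam x b"
      using in_CO_chain_le[OF x p _ ps(1-3) _ ps(6)] ps(4,5) cover_imp_prec[OF qp] by blast
    then show ?thesis
      using ps(5,7) p lamx_transfer_inv[OF p]
      by (simp add: lamx_unmarked[OF U2_unmarked[OF True]] lamx_An[OF ps(5)])
  next
    case False
    then have "q \<in> An n \<union> U1"
      using cover_An_or_unmarked[OF qp] U1_Un_U2 by blast
    moreover have "\<not> (q \<in> An n \<and> p \<in> An n)"
      using cover_not_both_An[OF qp] by blast
    ultimately show ?thesis
      using in_CO_mono_marked[OF x _ p _ cover_imp_prec[OF qp]] p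
      by (simp add: lamx_transfer_inv)
  qed
qed

lemma transfer_inv_in_gt_patterns:
  assumes x: "in_CO n U1 U2 lam x"
  shows "\<psi> x \<in> gt_patterns n (\<lambda>j. int (lam j))"
  unfolding gt_patterns_def
proof (intro CollectI conjI allI impI)
  fix p assume "p \<notin> unmarked n"
  then show "\<psi> x p = 0"
    by (rule transfer_inv_outside)
next
  fix i j assume ij: "1 \<le> i" "i \<le> j" "j \<le> n"
  then have "(i, j) \<in> unmarked n"
    by (simp add: unmarked_def)
  then show "with_marking (\<lambda>j. int (lam j)) (\<psi> x) (i - 1, j) \<le> \<psi> x (i, j)"
      "\<psi> x (i, j) \<le> with_marking (\<lambda>j. int (lam j)) (\<psi> x) (i - 1, j - 1)"
    using transfer_inv_cover_mono[OF x cover_down[OF ij]] transfer_inv_cover_mono[OF x cover_diag[OF ij]]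
    by (simp_all add: lamx_eq_with_marking with_marking_unmarked)
qed

lemma bij_betw_transfer:
  "bij_betw \<phi> (gt_patterns n (\<lambda>j. int (lam j))) (lattice_points n U1 U2 lam)"
proof (rule bij_betw_byWitness[where f' = \<psi>])
  show "\<forall>y\<in>gt_patterns n (\<lambda>j. int (lam j)). \<psi> (\<phi> y) = y"
    using transfer_inv_transfer gt_patterns_outside by blast
  show "\<forall>x\<in>lattice_points n U1 U2 lam. \<phi> (\<psi> x) = x"
    using transfer_transfer_inv in_CO_outside unfolding lattice_points_def by blast
  show "\<phi> ` gt_patterns n (\<lambda>j. int (lam j)) \<subseteq> lattice_points n U1 U2 lam"
    using transfer_in_CO unfolding lattice_points_def by blast
  show "\<psi> ` lattice_points n U1 U2 lam \<subseteq> gt_patterns n (\<lambda>j. int (lam j))"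
    using transfer_inv_in_gt_patterns unfolding lattice_points_def by blast
qed

end

theorem corollary6p4:
  fixes n :: nat and lam :: "nat \<Rightarrow> nat" and U1 U2 :: "(nat \<times> nat) set"
  assumes "n \<ge> 1"
    and "\<And>i j. i \<le> j \<Longrightarrow> j \<le> n \<Longrightarrow> lam j \<le> lam i"
    and "admissible n U1 U2"
  shows "real (card (lattice_points n U1 U2 lam)) =
    (\<Prod>(i, j)\<in>{(i, j). i < j \<and> j \<le> n}.
       (real (lam i) - real (lam j) + real j - real i) / (real j - real i))"
proof -
  interpret admissible_decomposition n U1 U2 lam
    by unfold_locales (rule assms(3))
  have "card (lattice_points n U1 U2 lam) = card (gt_patterns n (\<lambda>j. int (lam j)))"
    using bij_betw_same_card[OF bij_betw_transfer] by simp
  also have "real \<dots> = weyl_dim (Suc n) (\<lambda>j. int (lam j))"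
    using assms(2) by (intro card_gt_patterns[THEN conjunct2]) simp
  also have "\<dots> = (\<Prod>(i, j)\<in>{(i, j). i < j \<and> j \<le> n}.
      (real (lam i) - real (lam j) + real j - real i) / (real j - real i))"
    unfolding weyl_dim_def vandermonde_ratio_def less_Suc_eq_le
    by (rule prod.cong[OF refl]) (auto simp: algebra_simps)
  finally show ?thesis .
qed

end
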